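(* Let $F$ be the infinite cyclic group with generator $a$ and identity $e$, let $k$ be a field and $kF$ the group algebra with multiplication $m$. Define a linear map $\Delta:kF\to kF\otimes kF$ by $$\Delta(e)=0,\quad \Delta(a)=e\otimes e,\quad \Delta(a^{-1})=-a^{-1}\otimes a^{-1},$$ $$\Delta(a^n)=(a\otimes 1)\Delta(a^{n-1})+e\otimes a^{n-1},\qquad \Delta(a^{-n})=-(a^{-n}\otimes 1)\Delta(a^n)(1\otimes a^{-n})\quad\text{for } n>1 .$$ Then $(kF,m,\Delta)$ is an $\epsilon$-bialgebra, i.e. $\Delta$ is coassociative, $(\Delta\otimes\mathrm{id})\Delta=(\mathrm{id}\otimes\Delta)\Delta$, and $\Delta(uv)=(u\otimes 1)\Delta(v)+\Delta(u)(1\otimes v)$ for all $u,v\in kF$.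
   Context: Here $1=e$ is the unit of $kF$, and products such as $(u\otimes 1)\Delta(v)$ are taken in the algebra $kF\otimes kF$. *)

theory Defs
  imports "HOL-Library.Poly_Mapping" "HOL-Library.Product_Plus"
begin

(* Model: F = (int,+) written additively, a^n is the key n.
  kF = int \<Rightarrow>\<^sub>0 'k (finitely supported functions, convolution product).
  kF \<otimes> kF is identified with k[F \<times> F] = (int \<times> int) \<Rightarrow>\<^sub>0 'k via a^i \<otimes> a^j \<mapsto> (i,j),
  and kF \<otimes> kF \<otimes> kF with (int \<times> int \<times> int) \<Rightarrow>\<^sub>0 'k. *)

type_synonym 'k kF = "int \<Rightarrow>\<^sub>0 'k"
type_synonym 'k kF2 = "(int \<times> int) \<Rightarrow>\<^sub>0 'k"
type_synonym 'k kF3 = "(int \<times> int \<times> int) \<Rightarrow>\<^sub>0 'k"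

definition gpow :: "int \<Rightarrow> 'k::field kF" where
  "gpow n = Poly_Mapping.single n 1"

definition tens :: "('a \<Rightarrow>\<^sub>0 'k::field) \<Rightarrow> ('b \<Rightarrow>\<^sub>0 'k) \<Rightarrow> ('a \<times> 'b \<Rightarrow>\<^sub>0 'k)" where
  "tens p q = (\<Sum>i\<in>Poly_Mapping.keys p. \<Sum>j\<in>Poly_Mapping.keys q. Poly_Mapping.single (i, j) (Poly_Mapping.lookup p i * Poly_Mapping.lookup q j))"

definition lin_ext :: "('a \<Rightarrow> ('b \<Rightarrow>\<^sub>0 'k::field)) \<Rightarrow> ('a \<Rightarrow>\<^sub>0 'k) \<Rightarrow> ('b \<Rightarrow>\<^sub>0 'k)" where
  "lin_ext f u = (\<Sum>x\<in>Poly_Mapping.keys u. \<Sum>y\<in>Poly_Mapping.keys (f x). Poly_Mapping.single y (Poly_Mapping.lookup u x * Poly_Mapping.lookup (f x) y))"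

fun delta_pos :: "nat \<Rightarrow> 'k::field kF2" where
  "delta_pos 0 = 0"
| "delta_pos (Suc 0) = tens (gpow 0) (gpow 0)"
| "delta_pos (Suc (Suc n)) =
     tens (gpow 1) 1 * delta_pos (Suc n) + tens (gpow 0) (gpow (int (Suc n)))"

definition delta_basis :: "int \<Rightarrow> 'k::field kF2" where
  "delta_basis n =
    (if n = 0 then 0
     else if n > 0 then delta_pos (nat n)
     else if n = -1 then - tens (gpow (-1)) (gpow (-1))
     else - (tens (gpow n) 1 * delta_pos (nat (-n)) * tens 1 (gpow n)))"

definition Delta :: "'k::field kF \<Rightarrow> 'k kF2" where
  "Delta = lin_ext delta_basis"

definition Delta_id :: "'k::field kF2 \<Rightarrow> 'k kF3" where
  "Delta_id = lin_ext (\<lambda>(i, j). lin_ext (\<lambda>(s, t). Poly_Mapping.single (s, t, j) 1) (Delta (gpow i)))"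

definition id_Delta :: "'k::field kF2 \<Rightarrow> 'k kF3" where
  "id_Delta = lin_ext (\<lambda>(i, j). lin_ext (\<lambda>(s, t). Poly_Mapping.single (i, s, t) 1) (Delta (gpow j)))"

end

theory Submission
  imports Defs
begin

text \<open>
  Unwinding the recursion,
  \<open>\<Delta>(a\<^sup>n) = \<Sum>\<^bsub>i+j=n-1\<^esub> w i j \<cdot> a\<^sup>i \<otimes> a\<^sup>j\<close>, where the weight \<open>w i j\<close> is \<open>1\<close> if
  \<open>i, j \<ge> 0\<close>, \<open>-1\<close> if \<open>i, j < 0\<close> and \<open>0\<close> otherwise; hence the coefficient of
  \<open>a\<^sup>i \<otimes> a\<^sup>j\<close> in \<open>\<Delta> u\<close> is \<open>u(i+j+1) \<cdot> w i j\<close>. The coefficient of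
  \<open>a\<^sup>p \<otimes> a\<^sup>q \<otimes> a\<^sup>r\<close> on either side of coassociativity is \<open>u(p+q+r+2)\<close> times
  \<open>w (p+q+1) r \<cdot> w p q\<close> resp. \<open>w p (q+r+1) \<cdot> w q r\<close>, and these agree by a sign case
  analysis. The Leibniz rule for \<open>a\<^sup>m, a\<^sup>n\<close> reduces to
  \<open>w i j = w (i-m) j + w i (j-n)\<close> whenever \<open>i+j+1 = m+n\<close>, and extends to all of
  \<open>kF\<close> by bilinearity.
\<close>

abbreviation lk :: "('a \<Rightarrow>\<^sub>0 'b::zero) \<Rightarrow> 'a \<Rightarrow> 'b" where
  "lk \<equiv> Poly_Mapping.lookup"

lemma sum_keys_if_eq:
  fixes P :: "'a \<Rightarrow>\<^sub>0 'k::semiring_0"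
  shows "(\<Sum>x\<in>Poly_Mapping.keys P. if x = c then lk P x * a else 0) = lk P c * a"
  by (cases "c \<in> Poly_Mapping.keys P") (simp_all add: sum.delta' in_keys_iff)

lemma poly_mapping_single_add_induct [case_names zero single_add]:
  assumes "P 0"
    and "\<And>f a b. P f \<Longrightarrow> P (Poly_Mapping.single a b + f)"
  shows "P f"
proof (induction f rule: update_induct)
  case const
  show ?case by (fact assms(1))
next
  case (update f a b)
  then have "Poly_Mapping.update a b f = Poly_Mapping.single a b + f"
    by (intro poly_mapping_eqI)
       (auto simp: lookup_update lookup_add lookup_single when_def in_keys_iff)
  with update.IH assms(2) show ?case by simp
qed

lemma lookup_lin_ext:
  "lk (lin_ext f u) y = (\<Sum>x\<in>Poly_Mapping.keys u. lk u x * lk (f x) y)"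
proof -
  have "lk (lin_ext f u) y = (\<Sum>x\<in>Poly_Mapping.keys u. \<Sum>z\<in>Poly_Mapping.keys (f x).
          if z = y then lk (f x) z * lk u x else 0)"
    unfolding lin_ext_def lookup_sum
    by (intro sum.cong refl) (simp add: lookup_single when_def mult.commute)
  also have "\<dots> = (\<Sum>x\<in>Poly_Mapping.keys u. lk (f x) y * lk u x)"
    by (intro sum.cong refl sum_keys_if_eq)
  finally show ?thesis by (simp add: mult.commute)
qed

lemma lookup_tens: "lk (tens p q) (i, j) = lk p i * lk q j"
proof -
  have inner: "(\<Sum>b\<in>Poly_Mapping.keys q. if a = i \<and> b = j then lk p a * lk q b else 0)
             = (if a = i then lk p a * lk q j else 0)" for a
    by (cases "a = i") (simp_all add: sum.delta' in_keys_iff)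
  have "lk (tens p q) (i, j) = (\<Sum>a\<in>Poly_Mapping.keys p. \<Sum>b\<in>Poly_Mapping.keys q.
          if a = i \<and> b = j then lk p a * lk q b else 0)"
    unfolding tens_def lookup_sum by (intro sum.cong refl) (simp add: lookup_single when_def)
  also have "\<dots> = lk p i * lk q j"
    unfolding inner by (rule sum_keys_if_eq)
  finally show ?thesis .
qed

lemma tens_add_left: "tens (p + p') q = tens p q + tens p' q"
  by (rule poly_mapping_eqI) (auto simp: lookup_tens lookup_add algebra_simps)

lemma tens_add_right: "tens p (q + q') = tens p q + tens p q'"
  by (rule poly_mapping_eqI) (auto simp: lookup_tens lookup_add algebra_simps)

lemma tens_zero_left [simp]: "tens 0 q = 0"
  by (simp add: tens_def)

lemma tens_zero_right [simp]: "tens p 0 = 0"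
  by (simp add: tens_def)

lemma tens_single:
  "tens (Poly_Mapping.single a c) (Poly_Mapping.single b d) = Poly_Mapping.single (a, b) (c * d)"
proof (rule poly_mapping_eqI)
  fix k :: "'a \<times> 'b"
  show "lk (tens (Poly_Mapping.single a c) (Poly_Mapping.single b d)) k
      = lk (Poly_Mapping.single (a, b) (c * d)) k"
    by (cases k) (simp add: lookup_tens lookup_single when_def)
qed

lemma tens_gpow: "tens (gpow m) (gpow n) = Poly_Mapping.single (m, n) 1"
  by (simp add: gpow_def tens_single)

lemma tens_single_one: "tens (Poly_Mapping.single a c) 1 = Poly_Mapping.single (a, 0) c"
  by (simp flip: single_one add: tens_single)

lemma tens_one_single: "tens 1 (Poly_Mapping.single b d) = Poly_Mapping.single (0, b) d"
  by (simp flip: single_one add: tens_single)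

lemma lookup_single_mult:
  fixes p :: "'a::ab_group_add \<Rightarrow>\<^sub>0 'k::comm_semiring_1"
  shows "lk (Poly_Mapping.single k c * p) x = c * lk p (x - k)"
proof -
  have "lk (Poly_Mapping.single k c * p) x = (\<Sum>l. (c when k = l) * (\<Sum>q. lk p q when x = l + q))"
    by (simp add: lookup_mult lookup_single)
  also have "\<dots> = (\<Sum>l. (c * (\<Sum>q. lk p q when x = l + q)) when l = k)"
    by (rule Sum_any.cong) (auto simp: when_def)
  also have "\<dots> = c * (\<Sum>q. lk p q when x = k + q)"
    by (rule Sum_any_when_equal)
  also have "(\<Sum>q. lk p q when x = k + q) = (\<Sum>q. lk p q when q = x - k)"
    by (rule Sum_any.cong) (auto simp: when_def algebra_simps)
  finally show ?thesis by simp
qed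

lemma lookup_mult_single:
  fixes p :: "'a::ab_group_add \<Rightarrow>\<^sub>0 'k::comm_semiring_1"
  shows "lk (p * Poly_Mapping.single k c) x = lk p (x - k) * c"
  by (simp add: mult.commute[of p] lookup_single_mult mult.commute[of c])

definition delta_weight :: "int \<Rightarrow> int \<Rightarrow> 'k::field" where
  "delta_weight i j = (if 0 \<le> i \<and> 0 \<le> j then 1 else if i < 0 \<and> j < 0 then -1 else 0)"

lemma lookup_delta_pos:
  "lk (delta_pos (Suc k) :: 'k::field kF2) (i, j) = (if i + j = int k \<and> 0 \<le> i \<and> 0 \<le> j then 1 else 0)"
proof (induction k arbitrary: i j)
  case 0
  then show ?case by (auto simp: tens_gpow lookup_single when_def)
next
  case (Suc k)
  have "lk (delta_pos (Suc (Suc k)) :: 'k kF2) (i, j)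
      = lk (delta_pos (Suc k) :: 'k kF2) (i - 1, j) + (if (0, int (Suc k)) = (i, j) then 1 else 0)"
    by (simp add: gpow_def tens_single tens_single_one tens_one_single lookup_add
        lookup_single_mult lookup_single when_def)
  then show ?case
    unfolding Suc.IH by auto
qed

text \<open>
  For \<open>n < -1\<close> conjugation by \<open>a\<^sup>n\<close> shifts the support of \<open>\<Delta>(a\<^sup>-\<^sup>n)\<close>, the
  antidiagonal \<open>i + j = -n - 1\<close> with \<open>i, j \<ge> 0\<close>, to \<open>i + j = n - 1\<close> with \<open>i, j < 0\<close>.
\<close>
lemma lookup_delta_basis:
  "lk (delta_basis n :: 'k::field kF2) (i, j) = (if i + j = n - 1 then delta_weight i j else 0)"
proof -
  consider "n = 0" | "n > 0" | "n = -1" | "n < -1" by linarith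
  then show ?thesis
  proof cases
    case 1
    then show ?thesis by (auto simp: delta_basis_def delta_weight_def)
  next
    case 2
    then have "nat n = Suc (nat (n - 1))" by simp
    with 2 show ?thesis
      by (auto simp: delta_basis_def lookup_delta_pos delta_weight_def)
  next
    case 3
    then show ?thesis
      by (auto simp: delta_basis_def tens_gpow lookup_single when_def delta_weight_def)
  next
    case 4
    then have "nat (-n) = Suc (nat (-n - 1))" by simp
    with 4 show ?thesis
      by (auto simp: delta_basis_def gpow_def tens_single_one tens_one_single
          lookup_single_mult lookup_mult_single lookup_delta_pos delta_weight_def)
  qed
qed

lemma lookup_Delta: "lk (Delta u :: 'k::field kF2) (i, j) = lk u (i + j + 1) * delta_weight i j"
proof -
  have "lk (Delta u :: 'k kF2) (i, j)
      = (\<Sum>x\<in>Poly_Mapping.keys u. if x = i + j + 1 then lk u x * delta_weight i j else 0)"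
    unfolding Delta_def lookup_lin_ext
    by (intro sum.cong refl) (auto simp: lookup_delta_basis)
  then show ?thesis by (simp only: sum_keys_if_eq)
qed

lemma Delta_add: "Delta (u + v) = Delta u + Delta v"
  by (rule poly_mapping_eqI) (auto simp: lookup_Delta lookup_add algebra_simps)

lemma Delta_zero [simp]: "Delta 0 = 0"
  by (rule poly_mapping_eqI) (auto simp: lookup_Delta)

lemma lookup_lin_ext_snoc:
  "lk (lin_ext (\<lambda>(s, t). Poly_Mapping.single (s, t, j) 1) (D :: 'k::field kF2)) (p, q, r)
     = (if j = r then lk D (p, q) else 0)"
proof -
  have "lk (lin_ext (\<lambda>(s, t). Poly_Mapping.single (s, t, j) 1) D) (p, q, r)
      = (\<Sum>y\<in>Poly_Mapping.keys D. if y = (p, q) then lk D y * (if j = r then 1 else 0) else 0)"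
    unfolding lookup_lin_ext
    by (intro sum.cong refl) (auto simp: lookup_single when_def split: prod.splits)
  then show ?thesis by (simp only: sum_keys_if_eq) simp
qed

lemma lookup_lin_ext_cons:
  "lk (lin_ext (\<lambda>(s, t). Poly_Mapping.single (i, s, t) 1) (D :: 'k::field kF2)) (p, q, r)
     = (if i = p then lk D (q, r) else 0)"
proof -
  have "lk (lin_ext (\<lambda>(s, t). Poly_Mapping.single (i, s, t) 1) D) (p, q, r)
      = (\<Sum>y\<in>Poly_Mapping.keys D. if y = (q, r) then lk D y * (if i = p then 1 else 0) else 0)"
    unfolding lookup_lin_ext
    by (intro sum.cong refl) (auto simp: lookup_single when_def split: prod.splits)
  then show ?thesis by (simp only: sum_keys_if_eq) simp
qed

lemma lookup_Delta_id:
  "lk (Delta_id (X :: 'k::field kF2)) (p, q, r) = lk X (p + q + 1, r) * delta_weight p q"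
proof -
  have "lk (Delta_id X) (p, q, r)
      = (\<Sum>x\<in>Poly_Mapping.keys X. if x = (p + q + 1, r) then lk X x * delta_weight p q else 0)"
    unfolding Delta_id_def lookup_lin_ext
    by (intro sum.cong refl)
       (auto simp: lookup_lin_ext_snoc lookup_Delta gpow_def lookup_single split: prod.splits)
  then show ?thesis by (simp only: sum_keys_if_eq)
qed

lemma lookup_id_Delta:
  "lk (id_Delta (X :: 'k::field kF2)) (p, q, r) = lk X (p, q + r + 1) * delta_weight q r"
proof -
  have "lk (id_Delta X) (p, q, r)
      = (\<Sum>x\<in>Poly_Mapping.keys X. if x = (p, q + r + 1) then lk X x * delta_weight q r else 0)"
    unfolding id_Delta_def lookup_lin_ext
    by (intro sum.cong refl)
       (auto simp: lookup_lin_ext_cons lookup_Delta gpow_def lookup_single split: prod.splits)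
  then show ?thesis by (simp only: sum_keys_if_eq)
qed

lemma delta_weight_assoc:
  "(delta_weight (p + q + 1) r * delta_weight p q :: 'k::field)
     = delta_weight p (q + r + 1) * delta_weight q r"
  unfolding delta_weight_def by auto

lemma Delta_coassoc: "Delta_id (Delta u) = id_Delta (Delta (u :: 'k::field kF))"
proof (rule poly_mapping_eqI)
  fix k :: "int \<times> int \<times> int"
  obtain p q r where k: "k = (p, q, r)" by (cases k) auto
  have "p + q + 1 + r + 1 = p + (q + r + 1) + 1" by simp
  then show "lk (Delta_id (Delta u)) k = lk (id_Delta (Delta u)) k"
    unfolding k lookup_Delta_id lookup_id_Delta lookup_Delta
    using delta_weight_assoc[of p q r, where 'k='k] by (simp add: mult.assoc)
qed

lemma delta_weight_leibniz:
  "i + j + 1 = m + n \<Longrightarrow> (delta_weight i j :: 'k::field) = delta_weight (i - m) j + delta_weight i (j - n)"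
  unfolding delta_weight_def by auto

lemma Delta_mult_single:
  fixes m n :: int and c d :: "'k::field"
  defines "x \<equiv> Poly_Mapping.single m c" and "y \<equiv> Poly_Mapping.single n d"
  shows "Delta (x * y) = tens x 1 * Delta y + Delta x * tens 1 y"
proof (rule poly_mapping_eqI)
  fix k :: "int \<times> int"
  obtain i j where k: "k = (i, j)" by (cases k) auto
  have "lk (tens x 1 * Delta y + Delta x * tens 1 y) (i, j)
      = (if i + j + 1 = m + n then c * d * (delta_weight (i - m) j + delta_weight i (j - n)) else 0)"
    by (auto simp: x_def y_def tens_single_one tens_one_single lookup_add lookup_single_mult
        lookup_mult_single lookup_single when_def lookup_Delta algebra_simps)
  moreover have "lk (Delta (x * y)) (i, j) = (if i + j + 1 = m + n then c * d * delta_weight i j else 0)"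
    by (simp add: x_def y_def mult_single lookup_Delta lookup_single when_def)
  ultimately show "lk (Delta (x * y)) k = lk (tens x 1 * Delta y + Delta x * tens 1 y) k"
    unfolding k using delta_weight_leibniz[of i j m n, where 'k='k] by simp
qed

lemma Delta_mult_single_left:
  "Delta (Poly_Mapping.single m c * v :: 'k::field kF)
     = tens (Poly_Mapping.single m c) 1 * Delta v + Delta (Poly_Mapping.single m c) * tens 1 v"
proof (induction v rule: poly_mapping_single_add_induct)
  case zero
  show ?case by simp
next
  case (single_add v n d)
  then show ?case
    by (simp add: distrib_left distrib_right Delta_add tens_add_right Delta_mult_single)
qed

lemma Delta_mult: "Delta (u * v :: 'k::field kF) = tens u 1 * Delta v + Delta u * tens 1 v"
proof (induction u rule: poly_mapping_single_add_induct)
  case zero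
  show ?case by simp
next
  case (single_add u m c)
  then show ?case
    by (simp add: distrib_left distrib_right Delta_add tens_add_left Delta_mult_single_left)
qed

theorem lemma3p9:
  shows "(\<forall>u :: 'k::field kF. Delta_id (Delta u) = id_Delta (Delta u))
       \<and> (\<forall>u v :: 'k::field kF. Delta (u * v) = tens u 1 * Delta v + Delta u * tens 1 v)"
  using Delta_coassoc Delta_mult by blast

end
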